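(* Let $\mathcal{D}=(X,\mathcal{B})$ be a $(v,k,\lambda)$ symmetric design of order $q=k-\lambda\geq 2$ and let $\Gamma_\mathcal{D}$ be its incidence graph. Then there exists a split resolving set for $\Gamma_\mathcal{D}$ of size $2\cdot\left\lceil\frac{v\log v}{k-\lambda}\right\rceil$.
   Context: A symmetric design with parameters $(v,k,\lambda)$ is a pair $(X,\mathcal{B})$ where $X$ is a set of $v$ points and $\mathcal{B}$ is a family of $k$-subsets of $X$ (blocks) such that any two distinct points lie in exactly $\lambda$ blocks and any two distinct blocks meet in exactly $\lambda$ points. Its order is $q=k-\lambda$. The incidence graph $\Gamma_\mathcal{D}$ is the bipartite graph on $X\cup\mathcal{B}$ with $x$ adjacent to $B$ iff $x\in B$. For a bipartite graph with bipartition $X\cup Y$, a split resolving set is a set $S=S_X\cup S_Y$ with $S_X\subseteq X$, $S_Y\subseteq Y$, such that any two distinct vertices of $X$ are at different distances from some vertex of $S_Y$, and any two distinct vertices of $Y$ are at different distances from some vertex of $S_X$. $\log$ is the natural logarithm. *)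

theory Defs
  imports Complex_Main "HOL-Library.Extended_Nat"
begin

definition symmetric_design :: "'a set \<Rightarrow> 'a set set \<Rightarrow> nat \<Rightarrow> nat \<Rightarrow> nat \<Rightarrow> bool" where
  "symmetric_design X B v k lam \<longleftrightarrow>
     finite X \<and> card X = v \<and> card B = v \<and>
     (\<forall>b\<in>B. b \<subseteq> X \<and> card b = k) \<and>
     (\<forall>x\<in>X. \<forall>y\<in>X. x \<noteq> y \<longrightarrow> card {b\<in>B. x \<in> b \<and> y \<in> b} = lam) \<and>
     (\<forall>b\<in>B. \<forall>c\<in>B. b \<noteq> c \<longrightarrow> card (b \<inter> c) = lam)"

definition inc_vertices :: "'a set \<Rightarrow> 'a set set \<Rightarrow> ('a + 'a set) set" where
  "inc_vertices X B = Inl ` X \<union> Inr ` B"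

fun inc_adj :: "'a set \<Rightarrow> 'a set set \<Rightarrow> ('a + 'a set) \<Rightarrow> ('a + 'a set) \<Rightarrow> bool" where
  "inc_adj X B (Inl x) (Inr b) = (x \<in> X \<and> b \<in> B \<and> x \<in> b)"
| "inc_adj X B (Inr b) (Inl x) = (x \<in> X \<and> b \<in> B \<and> x \<in> b)"
| "inc_adj X B _ _ = False"

definition inc_walk :: "'a set \<Rightarrow> 'a set set \<Rightarrow> nat \<Rightarrow> ('a + 'a set) \<Rightarrow> ('a + 'a set) \<Rightarrow> bool" where
  "inc_walk X B n u w \<longleftrightarrow> (\<exists>p :: nat \<Rightarrow> ('a + 'a set).
      p 0 = u \<and> p n = w \<and> u \<in> inc_vertices X B \<and> (\<forall>i<n. inc_adj X B (p i) (p (Suc i))))"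

definition inc_dist :: "'a set \<Rightarrow> 'a set set \<Rightarrow> ('a + 'a set) \<Rightarrow> ('a + 'a set) \<Rightarrow> enat" where
  "inc_dist X B u w = (if \<exists>n. inc_walk X B n u w then enat (LEAST n. inc_walk X B n u w) else \<infinity>)"

definition split_resolving :: "'a set \<Rightarrow> 'a set set \<Rightarrow> 'a set \<Rightarrow> 'a set set \<Rightarrow> bool" where
  "split_resolving X B SX SY \<longleftrightarrow> SX \<subseteq> X \<and> SY \<subseteq> B \<and>
     (\<forall>x\<in>X. \<forall>y\<in>X. x \<noteq> y \<longrightarrow>
        (\<exists>s\<in>SY. inc_dist X B (Inr s) (Inl x) \<noteq> inc_dist X B (Inr s) (Inl y))) \<and>
     (\<forall>b\<in>B. \<forall>c\<in>B. b \<noteq> c \<longrightarrow>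
        (\<exists>s\<in>SX. inc_dist X B (Inl s) (Inr b) \<noteq> inc_dist X B (Inl s) (Inr c)))"

end

theory Submission
  imports Defs "HOL-Library.FuncSet"
begin

text \<open>In the incidence graph a point and a block are at distance 1 exactly when they are
incident, so it suffices to choose a set of blocks such that every pair of points is separated
by one of them (exactly one of the two points lies in it), and dually a set of points
separating every pair of blocks. In a symmetric design of order \<open>q\<close> every pair of distinct
points is separated by exactly \<open>2q\<close> blocks and every pair of distinct blocks by exactly \<open>2q\<close>
points. Among the \<open>v\<^sup>m\<close> sequences of \<open>m = \<lceil>v log v / q\<rceil>\<close> blocks, those that fail to
separate a given pair number at most \<open>(v - 2q)\<^sup>m\<close>, and
\<open>v (v - 1) (v - 2q)\<^sup>m \<le> (v - 1) v\<^sup>m / v < v\<^sup>m\<close>, so some sequence separates all pairs.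
Finally \<open>m \<le> v\<close> because \<open>v \<le> q\<^sup>2 + q + 1 \<le> e\<^sup>q\<close>.\<close>

lemma square_plus_le_exp:
  fixes x :: real
  assumes "2 \<le> x"
  shows "x\<^sup>2 + x + 1 \<le> exp x"
proof -
  have "4 \<le> x\<^sup>2"
    using power_mono[OF assms, of 2] by simp
  then have "12 * x\<^sup>2 \<le> (4 * x + x\<^sup>2) * x\<^sup>2"
    using assms by (intro mult_right_mono) auto
  then have "x\<^sup>2 + x + 1 \<le> (\<Sum>n<5. x ^ n / fact n)"
    by (simp add: numeral_eq_Suc fact_numeral power2_eq_square algebra_simps)
  also have "\<dots> \<le> exp x"
    using sum_le_suminf[OF sums_summable[OF exp_converges[of x]], of "{..<5}"] assms
    by (simp add: exp_def divide_inverse mult.commute)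
  finally show ?thesis .
qed

lemma pairs_mult_power_lt_power:
  fixes v q m :: nat
  assumes "0 < q" "2 * q \<le> v" "real v * ln (real v) / real q \<le> real m"
  shows "v * (v - 1) * (v - 2 * q) ^ m < v ^ m"
proof -
  define t where "t = 2 * real q / real v"
  have v_pos: "0 < real v" and v_ge2: "2 \<le> real v"
    using assms(1,2) by linarith+
  have "real v * ln (real v) \<le> real m * real q"
    using assms(1,3) by (simp add: divide_le_eq)
  then have "2 * ln (real v) \<le> real m * t"
    using v_pos unfolding t_def by (simp add: mult.commute pos_le_divide_eq)
  have "(1 - t) ^ m \<le> exp (- t) ^ m"
    using assms(2) v_pos exp_ge_add_one_self[of "- t"]
    by (intro power_mono) (auto simp: t_def)
  also have "\<dots> = exp (- (real m * t))"
    by (simp add: exp_of_nat_mult[symmetric])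
  also have "\<dots> \<le> exp (- (2 * ln (real v)))"
    using \<open>2 * ln (real v) \<le> real m * t\<close> by simp
  also have "\<dots> = 1 / (real v)\<^sup>2"
    using v_pos exp_of_nat_mult[of 2 "ln (real v)"] by (simp add: exp_minus inverse_eq_divide)
  finally have decay: "(1 - t) ^ m \<le> 1 / (real v)\<^sup>2" .
  have "real (v - 2 * q) = real v * (1 - t)"
    using assms(2) v_pos by (simp add: of_nat_diff t_def right_diff_distrib)
  then have "real (v * (v - 1) * (v - 2 * q) ^ m) = real v * (real v - 1) * (real v ^ m * (1 - t) ^ m)"
    using v_ge2 by (simp add: of_nat_diff power_mult_distrib)
  also have "\<dots> \<le> real v * (real v - 1) * (real v ^ m * (1 / (real v)\<^sup>2))"
    using decay v_ge2 by (intro mult_left_mono) auto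
  also have "\<dots> = (real v - 1) / real v * real v ^ m"
    using v_pos by (simp add: field_simps power2_eq_square)
  also have "\<dots> < real (v ^ m)"
    using v_pos by (simp add: divide_less_eq)
  finally show ?thesis
    by (simp only: of_nat_less_iff)
qed

lemma exists_hitting_subset:
  fixes D :: "'i \<Rightarrow> 'p set"
  assumes "finite I" "finite P"
    and "\<forall>i\<in>I. card (P - D i) \<le> a"
    and "card I * a ^ m < card P ^ m"
  shows "\<exists>S\<subseteq>P. card S \<le> m \<and> (\<forall>i\<in>I. S \<inter> D i \<noteq> {})"
proof -
  define missing where "missing i = {..<m} \<rightarrow>\<^sub>E P - D i" for i
  have "card (\<Union>i\<in>I. missing i) \<le> (\<Sum>i\<in>I. card (missing i))"
    using assms(1) by (rule card_UN_le)
  also have "\<dots> \<le> (\<Sum>i\<in>I. a ^ m)"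
    using assms(3) by (intro sum_mono) (simp add: missing_def card_PiE power_mono)
  also have "\<dots> < card ({..<m} \<rightarrow>\<^sub>E P)"
    using assms(4) by (simp add: card_PiE)
  finally have "\<not> ({..<m} \<rightarrow>\<^sub>E P) \<subseteq> (\<Union>i\<in>I. missing i)"
    using card_mono[of "\<Union>i\<in>I. missing i" "{..<m} \<rightarrow>\<^sub>E P"] assms(1,2)
    by (auto simp: missing_def finite_PiE)
  then obtain f where f: "f \<in> {..<m} \<rightarrow>\<^sub>E P" "\<forall>i\<in>I. f \<notin> missing i"
    by blast
  have "\<forall>i\<in>I. f ` {..<m} \<inter> D i \<noteq> {}"
    using f unfolding missing_def by (auto simp: PiE_iff)
  moreover have "f ` {..<m} \<subseteq> P" "card (f ` {..<m}) \<le> m"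
    using f(1) card_image_le[of "{..<m}" f] by auto
  ultimately show ?thesis
    by blast
qed

lemma card_off_diagonal:
  assumes "finite U"
  shows "card {(u, w). u \<in> U \<and> w \<in> U \<and> u \<noteq> w} = card U * (card U - 1)"
proof -
  have "{(u, w). u \<in> U \<and> w \<in> U \<and> u \<noteq> w} = U \<times> U - (\<lambda>u. (u, u)) ` U"
    by auto
  moreover have "card ((\<lambda>u. (u, u)) ` U) = card U"
    by (rule card_image) (simp add: inj_on_def)
  moreover have "(\<lambda>u. (u, u)) ` U \<subseteq> U \<times> U"
    by auto
  ultimately show ?thesis
    using assms by (simp add: card_Diff_subset finite_subset card_cartesian_product diff_mult_distrib2)
qed

lemma exists_separating_subset:
  fixes R :: "'u \<Rightarrow> 'p \<Rightarrow> bool" and U :: "'u set" and P :: "'p set"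
  assumes "finite U" "finite P" "card U = v" "card P = v" "0 < q"
    and sep: "\<And>u w. u \<in> U \<Longrightarrow> w \<in> U \<Longrightarrow> u \<noteq> w \<Longrightarrow> 2 * q \<le> card {p\<in>P. R u p \<noteq> R w p}"
    and "real v * ln (real v) / real q \<le> real m" "m \<le> v"
  obtains S where "S \<subseteq> P" "card S = m"
    "\<And>u w. u \<in> U \<Longrightarrow> w \<in> U \<Longrightarrow> u \<noteq> w \<Longrightarrow> \<exists>s\<in>S. R u s \<noteq> R w s"
proof (cases "\<exists>u\<in>U. \<exists>w\<in>U. u \<noteq> w")
  case False
  obtain S where "S \<subseteq> P" "card S = m"
    using obtain_subset_with_card_n[of m P] assms(4,8) by metis
  then show ?thesis
    using False by (intro that) auto
next
  case True
  define pairs where "pairs = {(u, w). u \<in> U \<and> w \<in> U \<and> u \<noteq> w}"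
  define separating where "separating = (\<lambda>(u, w). {p\<in>P. R u p \<noteq> R w p})"
  have sub: "separating i \<subseteq> P" for i
    by (auto simp: separating_def split: prod.split)
  have card_rest: "card (P - separating i) = v - card (separating i)" for i
    using card_Diff_subset[OF finite_subset[OF sub assms(2)] sub] assms(4) by simp
  have card_le: "card (separating i) \<le> v" for i
    using card_mono[OF assms(2) sub] assms(4) by simp
  have sep': "2 * q \<le> card (separating i)" if "i \<in> pairs" for i
    using sep that by (auto simp: pairs_def separating_def)
  obtain i where "i \<in> pairs"
    using True by (auto simp: pairs_def)
  then have "2 * q \<le> v"
    using sep' card_le order_trans by blast
  have rest_le: "\<forall>i\<in>pairs. card (P - separating i) \<le> v - 2 * q"
    using sep' card_rest by (simp add: diff_le_mono2)
  have card_pairs: "card pairs = v * (v - 1)"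
    using card_off_diagonal[OF assms(1)] unfolding pairs_def assms(3) .
  have bound: "card pairs * (v - 2 * q) ^ m < card P ^ m"
    unfolding card_pairs assms(4) by (rule pairs_mult_power_lt_power[OF \<open>0 < q\<close> \<open>2 * q \<le> v\<close> assms(7)])
  have "finite pairs"
    using finite_subset[of pairs "U \<times> U"] assms(1) by (auto simp: pairs_def)
  then obtain S0 where S0: "S0 \<subseteq> P" "card S0 \<le> m" "\<forall>i\<in>pairs. S0 \<inter> separating i \<noteq> {}"
    using exists_hitting_subset[OF _ assms(2) rest_le bound] by blast
  have "m \<le> card P"
    using assms(4,8) by simp
  then obtain S where S: "S0 \<subseteq> S" "S \<subseteq> P" "card S = m"
    using exists_subset_between[OF S0(2) _ S0(1) assms(2)] by blast
  have "\<exists>s\<in>S. R u s \<noteq> R w s" if "u \<in> U" "w \<in> U" "u \<noteq> w" for u w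
  proof -
    have "(u, w) \<in> pairs"
      using that by (simp add: pairs_def)
    then have "S0 \<inter> separating (u, w) \<noteq> {}"
      using S0(3) by blast
    then show ?thesis
      using S(1) by (auto simp: separating_def)
  qed
  then show ?thesis
    by (rule that[OF S(2,3)])
qed

text \<open>With \<open>w = v - 2k + l\<close> the hypothesis becomes \<open>l w = q (q - 1)\<close>; both factors are then
positive, and \<open>(l - 1)(w - 1) \<ge> 0\<close> gives \<open>v = 2q + l + w \<le> q\<^sup>2 + q + 1\<close>.\<close>

lemma order_bound_from_fisher:
  fixes l k v q :: int
  assumes fisher: "l * (v - 1) = k * (k - 1)" and "k = l + q" "2 \<le> q" "0 \<le> l"
  shows "v \<le> q\<^sup>2 + q + 1"
proof -
  define w where "w = v - 2 * k + l"
  have lw: "l * w = q\<^sup>2 - q"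
    using fisher \<open>k = l + q\<close> unfolding w_def by (simp add: algebra_simps power2_eq_square)
  have "2 * q \<le> q * q"
    using \<open>2 \<le> q\<close> by (intro mult_right_mono) auto
  then have "2 \<le> q\<^sup>2 - q"
    using \<open>2 \<le> q\<close> unfolding power2_eq_square by linarith
  then have "1 \<le> l" "1 \<le> w"
    using lw \<open>0 \<le> l\<close> by (smt (verit) mult_nonneg_nonpos mult_eq_0_iff)+
  then have "0 \<le> (l - 1) * (w - 1)"
    by simp
  then have "l + w \<le> l * w + 1"
    by (simp add: algebra_simps)
  then show ?thesis
    using lw \<open>k = l + q\<close> unfolding w_def by simp
qed

lemma card_filter_eq_sum: "finite C \<Longrightarrow> card {c\<in>C. Q c} = (\<Sum>c\<in>C. if Q c then 1 else 0)"
  by (simp add: sum.If_cases Int_def conj_commute)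

lemma sum_card_filter_swap:
  assumes "finite A" "finite C"
  shows "(\<Sum>a\<in>A. card {c\<in>C. Q a c}) = (\<Sum>c\<in>C. card {a\<in>A. Q a c})"
  using assms by (simp add: card_filter_eq_sum sum.swap[of _ A C])

locale sym_design =
  fixes X :: "'a set" and B :: "'a set set" and v k lam :: nat
  assumes design: "symmetric_design X B v k lam"
begin

lemma finite_points: "finite X"
  and card_points: "card X = v"
  and card_blocks: "card B = v"
  and block_subset: "b \<in> B \<Longrightarrow> b \<subseteq> X"
  and card_block: "b \<in> B \<Longrightarrow> card b = k"
  and card_blocks_through_two_points:
    "x \<in> X \<Longrightarrow> y \<in> X \<Longrightarrow> x \<noteq> y \<Longrightarrow> card {b\<in>B. x \<in> b \<and> y \<in> b} = lam"
  and card_block_inter: "b \<in> B \<Longrightarrow> c \<in> B \<Longrightarrow> b \<noteq> c \<Longrightarrow> card (b \<inter> c) = lam"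
  using design unfolding symmetric_design_def by auto

lemma finite_block: "b \<in> B \<Longrightarrow> finite b"
  using finite_points block_subset finite_subset by blast

lemma finite_blocks: "finite B"
  using finite_points block_subset by (meson Pow_iff finite_Pow_iff finite_subset subsetI)

lemma point_degree_mult:
  assumes "x \<in> X"
  shows "card {b\<in>B. x \<in> b} * (k - 1) = lam * (v - 1)"
proof -
  have "lam * (v - 1) = (\<Sum>y\<in>X - {x}. lam)"
    using assms finite_points card_points by (simp add: card_Diff_singleton)
  also have "\<dots> = (\<Sum>y\<in>X - {x}. card {b\<in>B. x \<in> b \<and> y \<in> b})"
    using assms card_blocks_through_two_points by (intro sum.cong) auto
  also have "\<dots> = (\<Sum>b\<in>B. card {y\<in>X - {x}. x \<in> b \<and> y \<in> b})"
    using finite_points finite_blocks by (intro sum_card_filter_swap) auto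
  also have "\<dots> = (\<Sum>b\<in>B. if x \<in> b then k - 1 else 0)"
  proof (rule sum.cong)
    fix b assume "b \<in> B"
    then have "x \<in> b \<Longrightarrow> {y\<in>X - {x}. x \<in> b \<and> y \<in> b} = b - {x}"
      using block_subset by auto
    then show "card {y\<in>X - {x}. x \<in> b \<and> y \<in> b} = (if x \<in> b then k - 1 else 0)"
      using \<open>b \<in> B\<close> finite_block card_block by simp
  qed simp
  also have "\<dots> = card {b\<in>B. x \<in> b} * (k - 1)"
    using finite_blocks by (simp add: sum.inter_filter[symmetric])
  finally show ?thesis ..
qed

lemma sum_point_degrees: "(\<Sum>x\<in>X. card {b\<in>B. x \<in> b}) = v * k"
proof -
  have "(\<Sum>x\<in>X. card {b\<in>B. x \<in> b}) = (\<Sum>b\<in>B. card {x\<in>X. x \<in> b})"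
    using finite_points finite_blocks by (rule sum_card_filter_swap)
  also have "\<dots> = (\<Sum>b\<in>B. k)"
  proof (rule sum.cong)
    fix b assume "b \<in> B"
    then have "{x\<in>X. x \<in> b} = b"
      using block_subset by auto
    then show "card {x\<in>X. x \<in> b} = k"
      using \<open>b \<in> B\<close> card_block by simp
  qed simp
  finally show ?thesis
    using card_blocks by simp
qed

text \<open>By \<open>point_degree_mult\<close> all point degrees coincide, so they equal their average \<open>k\<close>.\<close>

lemma point_degree:
  assumes "2 \<le> k" "x \<in> X"
  shows "card {b\<in>B. x \<in> b} = k"
proof -
  have "k - 1 \<noteq> 0"
    using assms(1) by simp
  then have "card {b\<in>B. y \<in> b} = card {b\<in>B. x \<in> b}" if "y \<in> X" for y
    using point_degree_mult[OF that] point_degree_mult[OF assms(2)] by (metis mult_right_cancel)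
  then have "v * card {b\<in>B. x \<in> b} = v * k"
    using sum_point_degrees card_points by simp
  moreover have "0 < v"
    using assms(2) finite_points card_points card_gt_0_iff by blast
  ultimately show ?thesis
    by simp
qed

lemma card_points_le:
  assumes "2 \<le> k - lam"
  shows "v \<le> (k - lam)\<^sup>2 + (k - lam) + 1"
proof (cases "X = {}")
  case False
  then obtain x where "x \<in> X"
    by blast
  have "2 \<le> k"
    using assms by simp
  then have "lam * (v - 1) = k * (k - 1)"
    using point_degree_mult[OF \<open>x \<in> X\<close>] point_degree[OF _ \<open>x \<in> X\<close>] by simp
  moreover have "1 \<le> v"
    using False finite_points unfolding card_points[symmetric] by (simp add: Suc_le_eq card_gt_0_iff)
  ultimately have fisher: "int lam * (int v - 1) = int k * (int k - 1)"
    using \<open>2 \<le> k\<close> by (metis Suc_1 Suc_leD of_nat_1 of_nat_diff of_nat_mult)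
  have "int k = int lam + int (k - lam)"
    using assms by simp
  then have "int v \<le> (int (k - lam))\<^sup>2 + int (k - lam) + 1"
    by (rule order_bound_from_fisher[OF fisher]) (use assms in auto)
  then have "int v \<le> int ((k - lam)\<^sup>2 + (k - lam) + 1)"
    by simp
  then show ?thesis
    by (simp only: of_nat_le_iff)
qed (use card_points in simp)

lemma ln_card_points_le:
  assumes "2 \<le> k - lam"
  shows "ln (real v) \<le> real (k - lam)"
proof (cases "v = 0")
  case False
  have "real v \<le> real ((k - lam)\<^sup>2 + (k - lam) + 1)"
    using card_points_le[OF assms] by (simp only: of_nat_le_iff)
  also have "\<dots> = (real (k - lam))\<^sup>2 + real (k - lam) + 1"
    by simp
  also have "\<dots> \<le> exp (real (k - lam))"
    using assms by (intro square_plus_le_exp) simp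
  finally show ?thesis
    using False ln_le_cancel_iff[of "real v" "exp (real (k - lam))"] by simp
qed simp

lemma card_blocks_separating_points:
  assumes "2 \<le> k" "x \<in> X" "y \<in> X" "x \<noteq> y"
  shows "card {b\<in>B. (x \<in> b) \<noteq> (y \<in> b)} = 2 * (k - lam)"
proof -
  have one_side: "card {b\<in>B. x \<in> b \<and> y \<notin> b} = k - lam"
    if "x \<in> X" "y \<in> X" "x \<noteq> y" for x y
  proof -
    have "{b\<in>B. x \<in> b} = {b\<in>B. x \<in> b \<and> y \<in> b} \<union> {b\<in>B. x \<in> b \<and> y \<notin> b}"
      by auto
    then have "k = lam + card {b\<in>B. x \<in> b \<and> y \<notin> b}"
      using finite_blocks point_degree[OF assms(1) that(1)] card_blocks_through_two_points[OF that]
      by (simp add: card_Un_disjoint disjoint_iff)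
    then show ?thesis
      by simp
  qed
  have "{b\<in>B. (x \<in> b) \<noteq> (y \<in> b)} = {b\<in>B. x \<in> b \<and> y \<notin> b} \<union> {b\<in>B. y \<in> b \<and> x \<notin> b}"
    by auto
  then show ?thesis
    using finite_blocks one_side[OF assms(2-4)] one_side[OF assms(3,2) assms(4)[symmetric]]
    by (simp add: card_Un_disjoint disjoint_iff)
qed

lemma card_points_separating_blocks:
  assumes "b \<in> B" "c \<in> B" "b \<noteq> c"
  shows "card {x\<in>X. (x \<in> b) \<noteq> (x \<in> c)} = 2 * (k - lam)"
proof -
  have "{x\<in>X. (x \<in> b) \<noteq> (x \<in> c)} = (b - c) \<union> (c - b)"
    using block_subset assms(1,2) by auto
  moreover have "card (b - c) = k - lam" "card (c - b) = k - lam"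
    using assms finite_block card_block card_block_inter
    by (simp_all add: card_Diff_subset_Int Int_commute)
  ultimately show ?thesis
    using assms(1,2) finite_block by (simp add: card_Un_disjoint disjoint_iff)
qed

end

lemma inc_adj_imp_neq: "inc_adj X B u w \<Longrightarrow> u \<noteq> w"
  by (cases u; cases w) auto

lemma inc_walk_1_iff: "inc_walk X B 1 u w \<longleftrightarrow> u \<in> inc_vertices X B \<and> inc_adj X B u w"
proof
  show "inc_walk X B 1 u w" if "u \<in> inc_vertices X B \<and> inc_adj X B u w"
    unfolding inc_walk_def using that by (intro exI[of _ "\<lambda>i. if i = 0 then u else w"]) auto
qed (auto simp: inc_walk_def)

lemma inc_dist_eq_1_iff:
  assumes "u \<in> inc_vertices X B"
  shows "inc_dist X B u w = 1 \<longleftrightarrow> inc_adj X B u w"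
proof
  assume adj: "inc_adj X B u w"
  then have "inc_walk X B 1 u w"
    using assms inc_walk_1_iff by blast
  moreover have "\<not> inc_walk X B 0 u w"
    using inc_adj_imp_neq[OF adj] by (auto simp: inc_walk_def)
  ultimately have "(LEAST n. inc_walk X B n u w) = 1"
    by (intro Least_equality) (auto simp: Suc_le_eq intro: gr0I)
  then show "inc_dist X B u w = 1"
    using \<open>inc_walk X B 1 u w\<close> by (auto simp: inc_dist_def one_enat_def)
next
  assume "inc_dist X B u w = 1"
  then have "\<exists>n. inc_walk X B n u w" "(LEAST n. inc_walk X B n u w) = 1"
    by (auto simp: inc_dist_def one_enat_def split: if_splits)
  then have "inc_walk X B 1 u w"
    by (metis LeastI_ex)
  then show "inc_adj X B u w"
    using inc_walk_1_iff by blast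
qed

lemma split_resolving_if_separating:
  assumes "SX \<subseteq> X" "SY \<subseteq> B"
    and points: "\<And>x y. x \<in> X \<Longrightarrow> y \<in> X \<Longrightarrow> x \<noteq> y \<Longrightarrow> \<exists>s\<in>SY. (x \<in> s) \<noteq> (y \<in> s)"
    and blocks: "\<And>b c. b \<in> B \<Longrightarrow> c \<in> B \<Longrightarrow> b \<noteq> c \<Longrightarrow> \<exists>s\<in>SX. (s \<in> b) \<noteq> (s \<in> c)"
  shows "split_resolving X B SX SY"
  unfolding split_resolving_def
proof (intro conjI ballI impI)
  fix x y assume "x \<in> X" "y \<in> X" "x \<noteq> y"
  then obtain s where "s \<in> SY" "(x \<in> s) \<noteq> (y \<in> s)"
    using points by blast
  moreover have "inc_dist X B (Inr s) (Inl z) = 1 \<longleftrightarrow> z \<in> s" if "z \<in> X" for z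
    using that \<open>s \<in> SY\<close> assms(2) inc_dist_eq_1_iff[of "Inr s" X B] by (auto simp: inc_vertices_def)
  ultimately show "\<exists>s\<in>SY. inc_dist X B (Inr s) (Inl x) \<noteq> inc_dist X B (Inr s) (Inl y)"
    using \<open>x \<in> X\<close> \<open>y \<in> X\<close> by metis
next
  fix b c assume "b \<in> B" "c \<in> B" "b \<noteq> c"
  then obtain s where "s \<in> SX" "(s \<in> b) \<noteq> (s \<in> c)"
    using blocks by blast
  moreover have "inc_dist X B (Inl s) (Inr d) = 1 \<longleftrightarrow> s \<in> d" if "d \<in> B" for d
    using that \<open>s \<in> SX\<close> assms(1) inc_dist_eq_1_iff[of "Inl s" X B] by (auto simp: inc_vertices_def)
  ultimately show "\<exists>s\<in>SX. inc_dist X B (Inl s) (Inr b) \<noteq> inc_dist X B (Inl s) (Inr c)"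
    using \<open>b \<in> B\<close> \<open>c \<in> B\<close> by metis
qed (use assms in auto)

theorem corollary2p6:
  fixes X :: "'a set" and B :: "'a set set" and v k lam :: nat
  assumes "symmetric_design X B v k lam"
    and "k - lam \<ge> 2"
  shows "\<exists>SX SY. split_resolving X B SX SY \<and>
           card SX + card SY = 2 * nat \<lceil>real v * ln (real v) / real (k - lam)\<rceil>"
proof -
  interpret sym_design X B v k lam
    using assms(1) by unfold_locales
  define q where "q = k - lam"
  define m where "m = nat \<lceil>real v * ln (real v) / real q\<rceil>"
  have "0 < q" "2 \<le> k"
    using assms(2) by (auto simp: q_def)
  have m_ge: "real v * ln (real v) / real q \<le> real m"
    unfolding m_def by (rule real_nat_ceiling_ge)
  have "real v * ln (real v) \<le> real v * real q"
    using ln_card_points_le[OF assms(2)] by (simp add: q_def mult_left_mono)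
  then have "m \<le> v"
    using \<open>0 < q\<close> by (simp add: m_def pos_divide_le_eq)
  have points_separated: "2 * q \<le> card {b\<in>B. (x \<in> b) \<noteq> (y \<in> b)}"
    if "x \<in> X" "y \<in> X" "x \<noteq> y" for x y
    using card_blocks_separating_points[OF \<open>2 \<le> k\<close> that] by (simp add: q_def)
  obtain SY where SY: "SY \<subseteq> B" "card SY = m"
    "\<And>x y. x \<in> X \<Longrightarrow> y \<in> X \<Longrightarrow> x \<noteq> y \<Longrightarrow> \<exists>s\<in>SY. (x \<in> s) \<noteq> (y \<in> s)"
    by (rule exists_separating_subset[where R = "\<lambda>x b. x \<in> b", OF finite_points finite_blocks
          card_points card_blocks \<open>0 < q\<close> points_separated m_ge \<open>m \<le> v\<close>]) auto
  have blocks_separated: "2 * q \<le> card {x\<in>X. (x \<in> b) \<noteq> (x \<in> c)}"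
    if "b \<in> B" "c \<in> B" "b \<noteq> c" for b c
    using card_points_separating_blocks[OF that] by (simp add: q_def)
  obtain SX where SX: "SX \<subseteq> X" "card SX = m"
    "\<And>b c. b \<in> B \<Longrightarrow> c \<in> B \<Longrightarrow> b \<noteq> c \<Longrightarrow> \<exists>s\<in>SX. (s \<in> b) \<noteq> (s \<in> c)"
    by (rule exists_separating_subset[where R = "\<lambda>b x. x \<in> b", OF finite_blocks finite_points
          card_blocks card_points \<open>0 < q\<close> blocks_separated m_ge \<open>m \<le> v\<close>]) auto
  have "split_resolving X B SX SY"
    by (rule split_resolving_if_separating[OF SX(1) SY(1) SY(3) SX(3)])
  then show ?thesis
    using SX(2) SY(2) by (intro exI[of _ SX] exI[of _ SY]) (simp add: m_def q_def)
qed

end
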